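(* Let $F:\mathbb{R}^d\to\mathbb{R}^d$ be $L$-Lipschitz, $G:\mathbb{R}^d\rightrightarrows\mathbb{R}^d$ maximally monotone, the solution set of $0\in F(x)+G(x)$ nonempty, and suppose there is a nonempty subset of solutions each element $x^\star$ of which satisfies the $\rho$-weak MVI: $\langle u,x-x^\star\rangle\ge-\rho\|u\|^2$ for all $(x,u)$ in the graph of $F+G$, where $\rho>0$. Let $\eta<\frac1L$ and suppose $\rho<\eta$. Let $x^\star$ be such a solution and $(x_k)$ be generated by the inexact KM iteration in the context. Then for any $K\ge1$, $$\frac1K\sum_{k=0}^{K-1}\frac1{\eta^2}\|x_k-J_{\eta(F+G)}(x_k)\|^2\le\frac{11\|x_0-x^\star\|^2}{(\eta-\rho)^2K}.$$ The number of first-order oracle calls used at iteration $k$ is at most $2N_k$, where $N_k=\left\lceil\frac{4(1+\eta L)}{1-\eta L}\log\big(8(k+1)\log^2(k+2)\big)\right\rceil$.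
   Context: For an operator $A$, $J_A=(\mathrm{Id}+A)^{-1}$. A first-order oracle call is one evaluation of $F$ and one resolvent of (a positive multiple of) $G$. Subroutine FBF$(z_0,N,A,B_{\mathrm{in}},L_B)$: $\tau=\frac{1}{2L_B}$, $B(\cdot)=B_{\mathrm{in}}(\cdot)-z_0$; for $t=0,\dots,N-1$: $z_{t+1/2}=J_{\tau A}(z_t-\tau B(z_t))$, $z_{t+1}=z_{t+1/2}+\tau B(z_t)-\tau B(z_{t+1/2})$; output $z_N$. Inexact KM iteration: given $x_0\in\mathbb{R}^d$, $\alpha=1-\frac\rho\eta$; for $k=0,\dots,K-1$: $\widetilde J_{\eta(F+G)}(x_k)=\mathrm{FBF}(x_k,N_k,\eta G,\mathrm{Id}+\eta F,1+\eta L)$ with $N_k=\left\lceil\frac{4(1+\eta L)}{1-\eta L}\log(8(k+1)\log^2(k+2))\right\rceil$, and $x_{k+1}=(1-\alpha)x_k+\alpha\widetilde J_{\eta(F+G)}(x_k)$. *)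

theory Defs
  imports "HOL-Analysis.Analysis"
begin

text \<open>Set-valued operators on a Euclidean space are modelled as functions
  'a => 'a set; the graph of A is the set of pairs (x,u) with u in A x.\<close>

definition monotone_op :: "('a::real_inner \<Rightarrow> 'a set) \<Rightarrow> bool" where
  "monotone_op A \<longleftrightarrow>
     (\<forall>x y u v. u \<in> A x \<longrightarrow> v \<in> A y \<longrightarrow> inner (u - v) (x - y) \<ge> 0)"

definition maximal_monotone :: "('a::real_inner \<Rightarrow> 'a set) \<Rightarrow> bool" where
  "maximal_monotone A \<longleftrightarrow> monotone_op A \<and>
     (\<forall>B. monotone_op B \<and> (\<forall>x. A x \<subseteq> B x) \<longrightarrow> B = A)"

definition sum_op :: "('a::real_vector \<Rightarrow> 'a) \<Rightarrow> ('a \<Rightarrow> 'a set) \<Rightarrow> 'a \<Rightarrow> 'a set" where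
  "sum_op F G x = (\<lambda>v. F x + v) ` G x"

definition scale_op :: "real \<Rightarrow> ('a::real_vector \<Rightarrow> 'a set) \<Rightarrow> 'a \<Rightarrow> 'a set" where
  "scale_op c A x = (\<lambda>v. c *\<^sub>R v) ` A x"

text \<open>Resolvent J_A = (Id + A)^{-1}, read as a (single-valued) function:
  J_A x is the unique z with x \<in> z + A z.\<close>
definition resolvent :: "('a::real_vector \<Rightarrow> 'a set) \<Rightarrow> 'a \<Rightarrow> 'a" where
  "resolvent A x = (THE z. x - z \<in> A z)"

text \<open>One step of FBF(z0, N, A, B_in, L_B), tracking the iterate together with the
  number of evaluations of F (via B) and the number of resolvent evaluations so far.
  Each step evaluates B at z_t (once, reused) and at z_{t+1/2}, and one resolvent.\<close>
definition fbf_step :: "'a::real_vector \<Rightarrow> ('a \<Rightarrow> 'a set) \<Rightarrow> ('a \<Rightarrow> 'a) \<Rightarrow> real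
    \<Rightarrow> 'a \<times> nat \<times> nat \<Rightarrow> 'a \<times> nat \<times> nat" where
  "fbf_step z0 A Bin LB s =
     (let \<tau> = 1 / (2 * LB);
          B = (\<lambda>w. Bin w - z0);
          z = fst s;
          Bz = B z;
          zh = resolvent (scale_op \<tau> A) (z - \<tau> *\<^sub>R Bz)
      in (zh + \<tau> *\<^sub>R Bz - \<tau> *\<^sub>R B zh, fst (snd s) + 2, snd (snd s) + 1))"

definition fbf_run :: "'a::real_vector \<Rightarrow> nat \<Rightarrow> ('a \<Rightarrow> 'a set) \<Rightarrow> ('a \<Rightarrow> 'a) \<Rightarrow> real
    \<Rightarrow> 'a \<times> nat \<times> nat" where
  "fbf_run z0 N A Bin LB = (fbf_step z0 A Bin LB ^^ N) (z0, 0, 0)"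

definition FBF :: "'a::real_vector \<Rightarrow> nat \<Rightarrow> ('a \<Rightarrow> 'a set) \<Rightarrow> ('a \<Rightarrow> 'a) \<Rightarrow> real \<Rightarrow> 'a" where
  "FBF z0 N A Bin LB = fst (fbf_run z0 N A Bin LB)"

text \<open>Number of first-order oracle calls used by FBF: one call provides one
  evaluation of F and one resolvent, so the count is the maximum of the two tallies.\<close>
definition FBF_oracle_calls :: "'a::real_vector \<Rightarrow> nat \<Rightarrow> ('a \<Rightarrow> 'a set) \<Rightarrow> ('a \<Rightarrow> 'a) \<Rightarrow> real \<Rightarrow> nat" where
  "FBF_oracle_calls z0 N A Bin LB =
     (let s = fbf_run z0 N A Bin LB in max (fst (snd s)) (snd (snd s)))"

definition N_inner :: "real \<Rightarrow> real \<Rightarrow> nat \<Rightarrow> nat" where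
  "N_inner \<eta> L k = nat \<lceil>4 * (1 + \<eta> * L) / (1 - \<eta> * L)
                        * ln (8 * real (k + 1) * (ln (real (k + 2)))\<^sup>2)\<rceil>"

end

theory Submission
  imports Defs "HOL-Analysis.Harmonic_Numbers"
begin

(* The inner loop is Tseng's forward-backward-forward method for the inclusion
   0 in z - x + eta (F + G) z, whose solution is J x = J_{eta(F+G)}(x).  The forward operator
   z -> z + eta F z - x is (1 - eta L)-strongly monotone and (1 + eta L)-Lipschitz, so each FBF
   step contracts the squared distance to J x by 1 - 3 (1 - eta L) / (8 (1 + eta L)), and N_k
   steps leave a relative squared error of at most M_k^(-3/2), M_k = 8 (k+1) log^2 (k+2);
   these errors sum to at most 1/2.
   By the weak MVI, the exact Krasnosel'skii-Mann step with alpha = 1 - rho/eta decreases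
   |x - x*|^2 by alpha^2 |x - J x|^2.  Young's inequality absorbs the inexactness of the inner
   solve: |x_k - x*|^2 stays below 2 |x_0 - x*|^2, and telescoping yields
   alpha^2 sum_k |x_k - J x_k|^2 <= 6 |x_0 - x*|^2, where alpha eta = eta - rho.
   Resolvents are well defined by Minty's theorem, obtained from its finite version by
   compactness, and J_{eta(F+G)} by Banach's fixed point theorem since eta L < 1. *)

section \<open>Monotone operators and Minty's theorem\<close>

lemma mem_scale_op: "w \<in> scale_op c A z \<longleftrightarrow> (\<exists>v\<in>A z. w = c *\<^sub>R v)"
  by (auto simp: scale_op_def)

lemma mem_scale_op_sum_op:
  "w \<in> scale_op c (sum_op F G) z \<longleftrightarrow> (\<exists>v\<in>G z. w = c *\<^sub>R (F z + v))"
  by (auto simp: scale_op_def sum_op_def)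

lemma scale_op_scale_op: "scale_op a (scale_op b A) = scale_op (a * b) A"
  by (rule ext) (simp add: scale_op_def image_image)

lemma monotone_op_scale_op:
  assumes "monotone_op A" and "c \<ge> 0"
  shows "monotone_op (scale_op c A)"
  using assms by (auto simp: monotone_op_def mem_scale_op simp flip: scaleR_diff_right)

lemma maximal_monotone_scale_op:
  assumes mm: "maximal_monotone A" and c: "c > 0"
  shows "maximal_monotone (scale_op c A)"
  unfolding maximal_monotone_def
proof (intro conjI allI impI)
  show "monotone_op (scale_op c A)"
    using mm c by (simp add: maximal_monotone_def monotone_op_scale_op)
next
  fix B assume B: "monotone_op B \<and> (\<forall>x. scale_op c A x \<subseteq> B x)"
  have "A x \<subseteq> scale_op (1 / c) B x" for x
  proof
    fix v assume "v \<in> A x"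
    then have "c *\<^sub>R v \<in> B x" using B by (auto simp: scale_op_def)
    then show "v \<in> scale_op (1 / c) B x" using c by (force simp: mem_scale_op)
  qed
  moreover have "monotone_op (scale_op (1 / c) B)"
    using B c by (simp add: monotone_op_scale_op)
  ultimately have "scale_op (1 / c) B = A"
    using mm by (simp add: maximal_monotone_def)
  then show "B = scale_op c A"
    using c by (auto simp: scale_op_scale_op scale_op_def)
qed

lemma maximal_monotone_memI:
  assumes mm: "maximal_monotone A"
    and rel: "\<forall>x u. u \<in> A x \<longrightarrow> inner (v - u) (z - x) \<ge> 0"
  shows "v \<in> A z"
proof -
  define B where "B = A(z := insert v (A z))"
  have memB: "u \<in> B x \<longleftrightarrow> u \<in> A x \<or> (x = z \<and> u = v)" for x u
    by (auto simp: B_def)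
  have monA: "monotone_op A" using mm by (simp add: maximal_monotone_def)
  have rel': "inner (u - v) (x - z) \<ge> 0" if "u \<in> A x" for x u
    using rel that by (metis inner_minus_left inner_minus_right minus_diff_eq)
  have "monotone_op B"
    unfolding monotone_op_def memB
    using monA rel rel' by (auto simp: monotone_op_def)
  moreover have "\<forall>x. A x \<subseteq> B x" by (auto simp: B_def)
  ultimately have "B = A" using mm by (simp add: maximal_monotone_def)
  then show ?thesis by (metis B_def fun_upd_same insertI1)
qed

lemma maximal_monotone_graph_nonempty:
  assumes "maximal_monotone A"
  obtains x u where "u \<in> A x"
  using maximal_monotone_memI[OF assms] by blast

lemma norm_add_squared:
  fixes a b :: "'a::real_inner"
  shows "(norm (a + b))\<^sup>2 = (norm a)\<^sup>2 + 2 * inner a b + (norm b)\<^sup>2"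
  by (simp add: power2_norm_eq_inner inner_add_left inner_add_right inner_commute)

lemma norm_diff_squared:
  fixes a b :: "'a::real_inner"
  shows "(norm (a - b))\<^sup>2 = (norm a)\<^sup>2 - 2 * inner a b + (norm b)\<^sup>2"
  by (simp add: power2_norm_eq_inner inner_diff_left inner_diff_right inner_commute)

lemma convex_combination_monotone_inner_le:
  fixes P :: "('a::real_inner \<times> 'a) set" and \<mu> :: "'a \<times> 'a \<Rightarrow> real"
  assumes fin: "finite P"
    and mon: "\<forall>p\<in>P. \<forall>q\<in>P. inner (snd p - snd q) (fst p - fst q) \<ge> 0"
    and \<mu>0: "\<forall>p\<in>P. \<mu> p \<ge> 0" and \<mu>1: "sum \<mu> P = 1"
  shows "inner (\<Sum>p\<in>P. \<mu> p *\<^sub>R fst p) (\<Sum>p\<in>P. \<mu> p *\<^sub>R snd p)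
           \<le> (\<Sum>p\<in>P. \<mu> p * inner (snd p) (fst p))"
proof -
  define X where "X = (\<Sum>p\<in>P. \<mu> p *\<^sub>R fst p)"
  define W where "W = (\<Sum>p\<in>P. \<mu> p *\<^sub>R snd p)"
  define b where "b = (\<Sum>p\<in>P. \<mu> p * inner (snd p) (fst p))"
  have X: "(\<Sum>q\<in>P. \<mu> q * inner v (fst q)) = inner v X" for v
    by (simp add: X_def inner_sum_right)
  have W: "(\<Sum>q\<in>P. \<mu> q * inner (snd q) v) = inner W v" for v
    by (simp add: W_def inner_sum_left)
  have row: "(\<Sum>q\<in>P. \<mu> q * inner (snd p - snd q) (fst p - fst q))
      = inner (snd p) (fst p) - inner (snd p) X - inner W (fst p) + b" for p
  proof -
    have "(\<Sum>q\<in>P. \<mu> q * inner (snd p - snd q) (fst p - fst q))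
        = (\<Sum>q\<in>P. \<mu> q) * inner (snd p) (fst p) - (\<Sum>q\<in>P. \<mu> q * inner (snd p) (fst q))
          - (\<Sum>q\<in>P. \<mu> q * inner (snd q) (fst p)) + b"
      by (simp add: b_def inner_diff_left inner_diff_right right_diff_distrib sum.distrib
          sum_subtractf sum_distrib_right)
    then show ?thesis by (simp add: \<mu>1 X W)
  qed
  have "0 \<le> (\<Sum>p\<in>P. \<mu> p * (\<Sum>q\<in>P. \<mu> q * inner (snd p - snd q) (fst p - fst q)))"
    using mon \<mu>0 by (intro sum_nonneg mult_nonneg_nonneg) auto
  also have "\<dots> = (\<Sum>p\<in>P. \<mu> p * inner (snd p) (fst p)) - (\<Sum>p\<in>P. \<mu> p * inner (snd p) X)
      - (\<Sum>p\<in>P. \<mu> p * inner W (fst p)) + (\<Sum>p\<in>P. \<mu> p) * b"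
    by (simp add: row right_diff_distrib distrib_left sum.distrib sum_subtractf sum_distrib_right)
  also have "\<dots> = 2 * (b - inner X W)"
    by (simp add: \<mu>1 W flip: b_def) (simp add: X_def inner_sum_right inner_commute)
  finally show ?thesis by (simp add: X_def W_def b_def)
qed

lemma monotone_lift_convex_hull_nonneg:
  fixes P :: "('a::real_inner \<times> 'a) set"
  assumes fin: "finite P"
    and mon: "\<forall>p\<in>P. \<forall>q\<in>P. inner (snd p - snd q) (fst p - fst q) \<ge> 0"
    and m: "m \<in> convex hull ((\<lambda>p. (fst p, snd p, inner (snd p) (fst p))) ` P)"
  shows "(norm (fst (snd m) - fst m))\<^sup>2 / 4 + snd (snd m) \<ge> 0"
proof -
  define g where "g p = (fst p, snd p, inner (snd p) (fst p))" for p :: "'a \<times> 'a"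
  have inj: "inj_on g P" by (auto simp: g_def inj_on_def prod_eq_iff)
  obtain u where u0: "\<forall>y\<in>g ` P. 0 \<le> u y" and u1: "sum u (g ` P) = 1"
    and um: "(\<Sum>y\<in>g ` P. u y *\<^sub>R y) = m"
    using m fin by (auto simp: convex_hull_finite g_def [abs_def])
  define \<mu> where "\<mu> p = u (g p)" for p
  have \<mu>0: "\<forall>p\<in>P. \<mu> p \<ge> 0" and \<mu>1: "sum \<mu> P = 1"
    using u0 u1 by (simp_all add: \<mu>_def sum.reindex[OF inj])
  have m_eq: "m = (\<Sum>p\<in>P. \<mu> p *\<^sub>R g p)"
    using um by (simp add: \<mu>_def sum.reindex[OF inj])
  define X where "X = (\<Sum>p\<in>P. \<mu> p *\<^sub>R fst p)"
  define W where "W = (\<Sum>p\<in>P. \<mu> p *\<^sub>R snd p)"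
  have m_X: "fst m = X" and m_W: "fst (snd m) = W"
    and "snd (snd m) = (\<Sum>p\<in>P. \<mu> p * inner (snd p) (fst p))"
    by (simp_all add: m_eq X_def W_def g_def fst_sum snd_sum)
  then have "inner X W \<le> snd (snd m)"
    using convex_combination_monotone_inner_le[OF fin mon \<mu>0 \<mu>1] by (simp add: X_def W_def)
  moreover have "(norm (W - X))\<^sup>2 / 4 + inner X W = (norm ((1/2) *\<^sub>R (X + W)))\<^sup>2"
    by (simp add: norm_add_squared norm_diff_squared inner_commute field_simps)
  ultimately show ?thesis
    unfolding m_X m_W using zero_le_power2[of "norm ((1/2) *\<^sub>R (X + W))"] by linarith
qed

lemma finite_monotone_minty:
  fixes P :: "('a::euclidean_space \<times> 'a) set"
  assumes fin: "finite P"
    and mon: "\<forall>p\<in>P. \<forall>q\<in>P. inner (snd p - snd q) (fst p - fst q) \<ge> 0"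
  shows "\<exists>z. \<forall>p\<in>P. inner (z + snd p) (z - fst p) \<le> 0"
proof (cases "P = {}")
  case True
  then show ?thesis by simp
next
  case False
  define g where "g p = (fst p, snd p, inner (snd p) (fst p))" for p :: "'a \<times> 'a"
  define H where "H = convex hull (g ` P)"
  define h :: "'a \<times> 'a \<times> real \<Rightarrow> real"
    where "h m = - (norm (fst (snd m) - fst m))\<^sup>2 / 4 - snd (snd m)" for m
  have "compact H" "H \<noteq> {}"
    using fin False by (simp_all add: H_def compact_convex_hull finite_imp_compact)
  moreover have "continuous_on H h"
    unfolding h_def by (intro continuous_intros) auto
  ultimately obtain m where mH: "m \<in> H" and m_max: "\<forall>y\<in>H. h y \<le> h m"
    using continuous_attains_sup by blast
  have "h m \<le> 0"
    using monotone_lift_convex_hull_nonneg[OF fin mon, of m] mH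
    by (simp add: H_def h_def g_def [abs_def])
  define A where "A = fst (snd m) - fst m"
  define z where "z = - (1/2) *\<^sub>R A"
  \<comment> \<open>optimality of the maximiser m of the concave function h along the segment towards g p\<close>
  have "inner (z + snd p) (z - fst p) \<le> h m" if p: "p \<in> P" for p
  proof (rule ccontr)
    define \<gamma> where "\<gamma> = inner (z + snd p) (z - fst p) - h m"
    define e where "e = snd p - fst p - A"
    define c where "c = (norm e)\<^sup>2 / 4"
    define s where "s = \<gamma> / (c + \<gamma>)"
    define ms where "ms = (1 - s) *\<^sub>R m + s *\<^sub>R g p"
    assume "\<not> ?thesis"
    then have "\<gamma> > 0" by (simp add: \<gamma>_def)
    moreover have "c \<ge> 0" by (simp add: c_def)
    ultimately have s: "0 < s" "s \<le> 1" by (auto simp: s_def)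
    have "ms \<in> H"
      unfolding H_def ms_def using mH p s
      by (intro convexD[OF convex_convex_hull]) (auto simp: H_def intro: hull_inc)
    have "fst (snd ms) - fst ms = A + s *\<^sub>R e"
      by (simp add: ms_def g_def A_def e_def algebra_simps)
    moreover have "snd (snd ms) = snd (snd m) + s * (inner (snd p) (fst p) - snd (snd m))"
      by (simp add: ms_def g_def algebra_simps)
    ultimately have hms: "h ms = - ((norm A)\<^sup>2 + 2 * s * inner A e + s\<^sup>2 * (norm e)\<^sup>2) / 4
        - (snd (snd m) + s * (inner (snd p) (fst p) - snd (snd m)))"
      by (simp add: h_def norm_add_squared power_mult_distrib)
    have hm: "h m = - (norm A)\<^sup>2 / 4 - snd (snd m)"
      by (simp add: h_def A_def)
    have "inner (z + snd p) (z - fst p)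
        = (norm A)\<^sup>2 / 4 - inner A (snd p - fst p) / 2 - inner (snd p) (fst p)"
      by (simp add: z_def power2_norm_eq_inner inner_add_left inner_add_right
          inner_diff_left inner_diff_right inner_commute field_simps)
    moreover have "inner A e = inner A (snd p - fst p) - (norm A)\<^sup>2"
      by (simp add: e_def inner_diff_right power2_norm_eq_inner)
    ultimately have \<gamma>_eq: "\<gamma> = - inner A e / 2 - inner (snd p) (fst p) + snd (snd m)"
      unfolding \<gamma>_def hm by linarith
    have "h ms = h m + (s * \<gamma> - s\<^sup>2 * c)"
      unfolding hms hm c_def \<gamma>_eq by (simp add: field_simps)
    also have "s * \<gamma> - s\<^sup>2 * c = s * (\<gamma> - s * c)"
      by (simp add: power2_eq_square algebra_simps)
    also have "\<gamma> - s * c = \<gamma> * \<gamma> / (c + \<gamma>)"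
      using \<open>\<gamma> > 0\<close> \<open>c \<ge> 0\<close> by (simp add: s_def field_simps)
    finally have "h ms > h m"
      using s \<open>\<gamma> > 0\<close> \<open>c \<ge> 0\<close> by simp
    then show False using m_max \<open>ms \<in> H\<close> by force
  qed
  then show ?thesis using \<open>h m \<le> 0\<close> by (meson order_trans)
qed

lemma inner_add_diff_le_0_iff_cball:
  fixes z w x :: "'a::real_inner"
  shows "inner (z + w) (z - x) \<le> 0 \<longleftrightarrow> z \<in> cball ((1/2) *\<^sub>R (x - w)) (norm (x + w) / 2)"
proof -
  have "inner ((1/2) *\<^sub>R (x - w) - z) ((1/2) *\<^sub>R (x - w) - z) - (norm (x + w) / 2)\<^sup>2
      = inner (z + w) (z - x)"
    by (simp add: power2_norm_eq_inner inner_add_left inner_add_right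
        inner_diff_left inner_diff_right inner_commute field_simps)
  moreover have "0 \<le> norm (x + w) / 2" by simp
  ultimately show ?thesis unfolding mem_cball dist_norm norm_le_square by linarith
qed

lemma monotone_op_minty_point:
  fixes A :: "'a::euclidean_space \<Rightarrow> 'a set"
  assumes mon: "monotone_op A" and u0: "u0 \<in> A x0"
  shows "\<exists>z. \<forall>x u. u \<in> A x \<longrightarrow> inner (z + u - y) (z - x) \<le> 0"
proof -
  define S where "S p = {z. inner (z + (snd p - y)) (z - fst p) \<le> 0}" for p :: "'a \<times> 'a"
  have S_cball: "S p = cball ((1/2) *\<^sub>R (fst p - (snd p - y))) (norm (fst p + (snd p - y)) / 2)"
    for p
    unfolding S_def using inner_add_diff_le_0_iff_cball by blast
  define I where "I = {p. snd p \<in> A (fst p)}"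
  \<comment> \<open>the sets S p are closed balls, so by compactness it suffices to handle finitely many pairs\<close>
  have "S (x0, u0) \<inter> (\<Inter>p\<in>I. S p) \<noteq> {}"
  proof (rule compact_imp_fip_image)
    show "compact (S (x0, u0))" and "closed (S p)" for p
      by (simp_all add: S_cball)
  next
    fix I' assume "finite I'" and "I' \<subseteq> I"
    define T where "T = (\<lambda>p. (fst p, snd p - y)) ` insert (x0, u0) I'"
    have "finite T" using \<open>finite I'\<close> by (simp add: T_def)
    moreover have "\<forall>p\<in>insert (x0, u0) I'. snd p \<in> A (fst p)"
      using u0 \<open>I' \<subseteq> I\<close> by (auto simp: I_def)
    then have "\<forall>p\<in>T. \<forall>q\<in>T. inner (snd p - snd q) (fst p - fst q) \<ge> 0"
      using mon by (auto simp: T_def monotone_op_def)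
    ultimately obtain z where "\<forall>p\<in>T. inner (z + snd p) (z - fst p) \<le> 0"
      using finite_monotone_minty by blast
    then have "z \<in> S (x0, u0) \<inter> (\<Inter>p\<in>I'. S p)" by (auto simp: T_def S_def)
    then show "S (x0, u0) \<inter> (\<Inter>p\<in>I'. S p) \<noteq> {}" by blast
  qed
  then obtain z where z: "\<forall>p\<in>I. z \<in> S p" by blast
  have "inner (z + u - y) (z - x) \<le> 0" if "u \<in> A x" for x u
    using z that by (force simp: S_def I_def add_diff_eq)
  then show ?thesis by blast
qed

theorem maximal_monotone_minty:
  fixes A :: "'a::euclidean_space \<Rightarrow> 'a set"
  assumes mm: "maximal_monotone A"
  shows "\<exists>z. y - z \<in> A z"
proof -
  obtain x0 u0 where "u0 \<in> A x0" using maximal_monotone_graph_nonempty[OF mm] .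
  then obtain z where z: "\<forall>x u. u \<in> A x \<longrightarrow> inner (z + u - y) (z - x) \<le> 0"
    using monotone_op_minty_point mm unfolding maximal_monotone_def by blast
  have "inner ((y - z) - u) (z - x) = - inner (z + u - y) (z - x)" for x u
    by (simp add: algebra_simps flip: inner_minus_left)
  then have "\<forall>x u. u \<in> A x \<longrightarrow> inner ((y - z) - u) (z - x) \<ge> 0"
    using z by simp
  then show ?thesis using maximal_monotone_memI[OF mm] by blast
qed

section \<open>Resolvents\<close>

lemma resolvent_mem:
  assumes "\<exists>!z. y - z \<in> A z"
  shows "y - resolvent A y \<in> A (resolvent A y)"
  unfolding resolvent_def using theI'[OF assms] .

lemma monotone_op_resolvent_unique:
  assumes "monotone_op A" and "y - z1 \<in> A z1" and "y - z2 \<in> A z2"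
  shows "z1 = z2"
proof -
  have "inner ((y - z1) - (y - z2)) (z1 - z2) \<ge> 0"
    using assms unfolding monotone_op_def by blast
  moreover have "inner ((y - z1) - (y - z2)) (z1 - z2) = - (norm (z1 - z2))\<^sup>2"
    by (simp add: power2_norm_eq_inner flip: inner_minus_left)
  ultimately show ?thesis by simp
qed

lemma maximal_monotone_resolvent_ex1:
  fixes A :: "'a::euclidean_space \<Rightarrow> 'a set"
  assumes "maximal_monotone A"
  shows "\<exists>!z. y - z \<in> A z"
  using maximal_monotone_minty[OF assms] monotone_op_resolvent_unique assms
  unfolding maximal_monotone_def by blast

lemma maximal_monotone_resolvent:
  fixes A :: "'a::euclidean_space \<Rightarrow> 'a set"
  assumes "maximal_monotone A"
  shows "y - resolvent A y \<in> A (resolvent A y)"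
  using resolvent_mem[OF maximal_monotone_resolvent_ex1[OF assms]] .

lemma resolvent_nonexpansive:
  fixes A :: "'a::euclidean_space \<Rightarrow> 'a set"
  assumes mm: "maximal_monotone A"
  shows "1-lipschitz_on UNIV (resolvent A)"
proof (rule lipschitz_onI)
  fix y1 y2 :: 'a
  define d where "d = resolvent A y1 - resolvent A y2"
  have "inner ((y1 - resolvent A y1) - (y2 - resolvent A y2)) d \<ge> 0"
    using maximal_monotone_resolvent[OF mm] mm
    by (simp add: maximal_monotone_def monotone_op_def d_def)
  then have "norm d * norm d \<le> inner (y1 - y2) d"
    by (simp add: d_def inner_diff_left inner_diff_right power2_norm_eq_inner
        flip: power2_eq_square)
  also have "\<dots> \<le> norm (y1 - y2) * norm d"
    by (rule norm_cauchy_schwarz)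
  finally have "norm d \<le> norm (y1 - y2)"
    by (cases "norm d = 0") (auto intro: mult_right_le_imp_le)
  then show "dist (resolvent A y1) (resolvent A y2) \<le> 1 * dist y1 y2"
    by (simp add: d_def dist_norm)
qed auto

lemma lipschitz_on_inner_ge:
  assumes "L-lipschitz_on UNIV F"
  shows "inner (F a - F b) (a - b) \<ge> - L * (norm (a - b))\<^sup>2"
proof -
  have "\<bar>inner (F a - F b) (a - b)\<bar> \<le> norm (F a - F b) * norm (a - b)"
    by (rule Cauchy_Schwarz_ineq2)
  also have "\<dots> \<le> L * norm (a - b) * norm (a - b)"
    using lipschitz_on_normD[OF assms] by (simp add: mult_right_mono)
  finally show ?thesis by (simp add: power2_eq_square)
qed

lemma scale_op_sum_op_inner_ge:
  assumes lip: "L-lipschitz_on UNIV F" and mon: "monotone_op G" and \<eta>: "\<eta> \<ge> 0"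
    and "w1 \<in> scale_op \<eta> (sum_op F G) z1" and "w2 \<in> scale_op \<eta> (sum_op F G) z2"
  shows "inner (w1 - w2) (z1 - z2) \<ge> - (\<eta> * L) * (norm (z1 - z2))\<^sup>2"
proof -
  obtain v1 v2 where v: "v1 \<in> G z1" "v2 \<in> G z2"
    and w: "w1 - w2 = \<eta> *\<^sub>R ((F z1 - F z2) + (v1 - v2))"
    using assms(4,5) by (auto simp: mem_scale_op_sum_op algebra_simps)
  have "inner (v1 - v2) (z1 - z2) \<ge> 0"
    using mon v unfolding monotone_op_def by blast
  then have "inner ((F z1 - F z2) + (v1 - v2)) (z1 - z2) \<ge> - L * (norm (z1 - z2))\<^sup>2"
    using lipschitz_on_inner_ge[OF lip, of z1 z2] by (simp add: inner_add_left)
  then have "\<eta> * inner ((F z1 - F z2) + (v1 - v2)) (z1 - z2) \<ge> \<eta> * (- L * (norm (z1 - z2))\<^sup>2)"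
    using \<eta> by (rule mult_left_mono)
  then show ?thesis unfolding w by simp
qed

lemma resolvent_scale_sum_op:
  fixes F :: "'a::euclidean_space \<Rightarrow> 'a" and G :: "'a \<Rightarrow> 'a set"
  assumes lip: "L-lipschitz_on UNIV F" and mm: "maximal_monotone G"
    and \<eta>: "\<eta> > 0" and \<eta>L: "\<eta> * L < 1"
  defines "J \<equiv> resolvent (scale_op \<eta> (sum_op F G))"
  shows "x - J x \<in> scale_op \<eta> (sum_op F G) (J x)"
proof -
  have mm\<eta>: "maximal_monotone (scale_op \<eta> G)"
    using mm \<eta> by (rule maximal_monotone_scale_op)
  define T where "T z = resolvent (scale_op \<eta> G) (x - \<eta> *\<^sub>R F z)" for z
  \<comment> \<open>the fixed points of T are the solutions z of x - z \<in> \<eta> (F + G) z\<close>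
  have "dist (T z1) (T z2) \<le> (\<eta> * L) * dist z1 z2" for z1 z2
  proof -
    have "dist (T z1) (T z2) \<le> dist (x - \<eta> *\<^sub>R F z1) (x - \<eta> *\<^sub>R F z2)"
      using lipschitz_onD[OF resolvent_nonexpansive[OF mm\<eta>]] by (simp add: T_def)
    also have "\<dots> = \<eta> * dist (F z1) (F z2)"
      using \<eta> by (simp add: dist_norm norm_minus_commute flip: scaleR_diff_right)
    also have "\<dots> \<le> \<eta> * (L * dist z1 z2)"
      using lipschitz_onD[OF lip] \<eta> by (simp add: mult_left_mono)
    finally show ?thesis by (simp add: mult.assoc)
  qed
  then obtain z where "T z = z"
    using banach_fix_type[of "\<eta> * L" T] \<eta> lipschitz_on_nonneg[OF lip] \<eta>L by auto
  moreover obtain v where "v \<in> G (T z)" and "(x - \<eta> *\<^sub>R F z) - T z = \<eta> *\<^sub>R v"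
    using maximal_monotone_resolvent[OF mm\<eta>] by (force simp: T_def mem_scale_op)
  ultimately have "v \<in> G z" and "x - z = \<eta> *\<^sub>R (F z + v)"
    by (auto simp: algebra_simps)
  then have ex: "x - z \<in> scale_op \<eta> (sum_op F G) z"
    unfolding mem_scale_op_sum_op by blast
  have "z' = z" if "x - z' \<in> scale_op \<eta> (sum_op F G) z'" for z'
  proof -
    have "- (norm (z' - z))\<^sup>2 = inner ((x - z') - (x - z)) (z' - z)"
      by (simp add: power2_norm_eq_inner flip: inner_minus_left)
    also have "\<dots> \<ge> - (\<eta> * L) * (norm (z' - z))\<^sup>2"
      using scale_op_sum_op_inner_ge[OF lip _ _ that ex] mm \<eta>
      by (simp add: maximal_monotone_def)
    finally have "(1 - \<eta> * L) * (norm (z' - z))\<^sup>2 \<le> 0"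
      by (simp add: algebra_simps)
    then show ?thesis using \<eta>L by (simp add: mult_le_0_iff)
  qed
  with ex have "\<exists>!z. x - z \<in> scale_op \<eta> (sum_op F G) z" by blast
  then show ?thesis unfolding J_def by (rule resolvent_mem)
qed

lemma scale_op_weak_mvi:
  assumes wmvi: "\<forall>y u. u \<in> A y \<longrightarrow> inner u (y - xs) \<ge> - \<rho> * (norm u)\<^sup>2"
    and \<eta>: "\<eta> > 0" and "w \<in> scale_op \<eta> A z"
  shows "inner w (z - xs) \<ge> - (\<rho> / \<eta>) * (norm w)\<^sup>2"
proof -
  obtain u where "u \<in> A z" and w: "w = \<eta> *\<^sub>R u"
    using assms(3) by (auto simp: mem_scale_op)
  then have "inner u (z - xs) \<ge> - \<rho> * (norm u)\<^sup>2"
    using wmvi by blast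
  then have "\<eta> * inner u (z - xs) \<ge> \<eta> * (- \<rho> * (norm u)\<^sup>2)"
    using \<eta> by (intro mult_left_mono) auto
  then show ?thesis
    using \<eta> by (simp add: w power2_eq_square field_simps)
qed

section \<open>The forward-backward-forward inner loop\<close>

lemma tseng_step_descent:
  fixes A :: "'a::real_inner \<Rightarrow> 'a set" and B :: "'a \<Rightarrow> 'a"
  assumes mon: "monotone_op A" and \<tau>: "\<tau> > 0"
    and strong: "\<And>a b. inner (B a - B b) (a - b) \<ge> \<mu> * (norm (a - b))\<^sup>2"
    and lip: "\<beta>-lipschitz_on UNIV B"
    and zs: "- B zs \<in> A zs"
    and zh: "z - \<tau> *\<^sub>R B z - zh \<in> scale_op \<tau> A zh"
  shows "(norm (zh + \<tau> *\<^sub>R B z - \<tau> *\<^sub>R B zh - zs))\<^sup>2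
    \<le> (norm (z - zs))\<^sup>2 - (1 - (\<tau> * \<beta>)\<^sup>2) * (norm (z - zh))\<^sup>2
      - 2 * \<tau> * \<mu> * (norm (zh - zs))\<^sup>2"
proof -
  define p where "p = z - zh"
  define q where "q = zh - zs"
  define d where "d = B z - B zh"
  obtain v where "v \<in> A zh" and v: "z - \<tau> *\<^sub>R B z - zh = \<tau> *\<^sub>R v"
    using zh by (auto simp: mem_scale_op)
  then have "inner (v - (- B zs)) q \<ge> 0"
    using mon zs unfolding monotone_op_def q_def by blast
  then have "\<tau> * inner (v - (- B zs)) q \<ge> 0"
    using \<tau> by simp
  moreover have "\<tau> *\<^sub>R (v - (- B zs)) = p - \<tau> *\<^sub>R d - \<tau> *\<^sub>R (B zh - B zs)"
    using v by (simp add: p_def d_def algebra_simps)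
  ultimately have mon_step: "inner p q - \<tau> * inner d q - \<tau> * inner (B zh - B zs) q \<ge> 0"
    by (metis inner_diff_left inner_scaleR_left)
  have d_le: "(norm d)\<^sup>2 \<le> (\<beta> * norm p)\<^sup>2"
    using lipschitz_on_normD[OF lip] by (simp add: d_def p_def power_mono)
  have "\<tau> * inner (B zh - B zs) q \<ge> \<tau> * (\<mu> * (norm q)\<^sup>2)"
    using strong \<tau> unfolding q_def by (intro mult_left_mono) auto
  moreover have "\<tau>\<^sup>2 * (norm d)\<^sup>2 \<le> (\<tau> * \<beta>)\<^sup>2 * (norm p)\<^sup>2"
    using mult_left_mono[OF d_le, of "\<tau>\<^sup>2"] by (simp add: power_mult_distrib mult.assoc)
  moreover have "(norm (zh + \<tau> *\<^sub>R B z - \<tau> *\<^sub>R B zh - zs))\<^sup>2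
      = (norm q)\<^sup>2 + 2 * \<tau> * inner d q + \<tau>\<^sup>2 * (norm d)\<^sup>2"
  proof -
    have "zh + \<tau> *\<^sub>R B z - \<tau> *\<^sub>R B zh - zs = q + \<tau> *\<^sub>R d"
      by (simp add: q_def d_def algebra_simps)
    then show ?thesis by (simp add: norm_add_squared inner_commute power_mult_distrib)
  qed
  moreover have "(norm (z - zs))\<^sup>2 = (norm p)\<^sup>2 + 2 * inner p q + (norm q)\<^sup>2"
    using norm_add_squared[of p q] by (simp add: p_def q_def)
  ultimately show ?thesis
    using mon_step unfolding p_def q_def by (simp add: algebra_simps)
qed

lemma fbf_step_contraction:
  fixes A :: "'a::euclidean_space \<Rightarrow> 'a set"
  assumes mm: "maximal_monotone A"
    and strong: "\<And>a b. inner (Bin a - Bin b) (a - b) \<ge> \<mu> * (norm (a - b))\<^sup>2"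
    and lip: "\<beta>-lipschitz_on UNIV Bin" and \<mu>: "0 \<le> \<mu>" "\<mu> \<le> \<beta>" and \<beta>: "\<beta> > 0"
    and zs: "z0 - Bin zs \<in> A zs"
  shows "(norm (fst (fbf_step z0 A Bin \<beta> s) - zs))\<^sup>2
    \<le> (1 - 3 * \<mu> / (8 * \<beta>)) * (norm (fst s - zs))\<^sup>2"
proof -
  define \<tau> where "\<tau> = 1 / (2 * \<beta>)"
  define B where "B w = Bin w - z0" for w
  define z where "z = fst s"
  define zh where "zh = resolvent (scale_op \<tau> A) (z - \<tau> *\<^sub>R B z)"
  have \<tau>: "\<tau> > 0" using \<beta> by (simp add: \<tau>_def)
  have step: "fst (fbf_step z0 A Bin \<beta> s) = zh + \<tau> *\<^sub>R B z - \<tau> *\<^sub>R B zh"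
    by (simp add: fbf_step_def Let_def zh_def z_def B_def \<tau>_def)
  have "\<beta>-lipschitz_on UNIV B"
    using lipschitz_on_diff[OF lip lipschitz_on_constant, of z0] by (simp add: B_def [abs_def])
  moreover have "z - \<tau> *\<^sub>R B z - zh \<in> scale_op \<tau> A zh"
    unfolding zh_def by (rule maximal_monotone_resolvent[OF maximal_monotone_scale_op[OF mm \<tau>]])
  ultimately have descent: "(norm (fst (fbf_step z0 A Bin \<beta> s) - zs))\<^sup>2
      \<le> (norm (z - zs))\<^sup>2 - (1 - (\<tau> * \<beta>)\<^sup>2) * (norm (z - zh))\<^sup>2
      - 2 * \<tau> * \<mu> * (norm (zh - zs))\<^sup>2"
    unfolding step using mm zs strong
    by (intro tseng_step_descent[OF _ \<tau>]) (auto simp: B_def maximal_monotone_def)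
  define \<kappa> where "\<kappa> = \<mu> / \<beta>"
  have \<kappa>: "0 \<le> \<kappa>" "\<kappa> \<le> 1" using \<mu> \<beta> by (simp_all add: \<kappa>_def)
  have "(\<tau> * \<beta>)\<^sup>2 = 1/4" and "2 * \<tau> * \<mu> = \<kappa>"
    using \<beta> by (simp_all add: \<tau>_def \<kappa>_def power2_eq_square)
  with descent have "(norm (fst (fbf_step z0 A Bin \<beta> s) - zs))\<^sup>2
      \<le> (norm (z - zs))\<^sup>2 - (3/4 * (norm (z - zh))\<^sup>2 + \<kappa> * (norm (zh - zs))\<^sup>2)"
    by simp
  also have "\<dots> \<le> (norm (z - zs))\<^sup>2 - 3 * \<kappa> / 8 * (norm (z - zs))\<^sup>2"
  proof -
    have split: "(norm (z - zs))\<^sup>2 \<le> 2 * (norm (z - zh))\<^sup>2 + 2 * (norm (zh - zs))\<^sup>2"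
      using norm_add_squared[of "z - zh" "zh - zs"] norm_diff_squared[of "z - zh" "zh - zs"]
        zero_le_power2[of "norm ((z - zh) - (zh - zs))"] by simp
    have "3 * \<kappa> / 8 * (norm (z - zs))\<^sup>2
        \<le> 3 * \<kappa> / 4 * (norm (z - zh))\<^sup>2 + 3 * \<kappa> / 4 * (norm (zh - zs))\<^sup>2"
      using mult_left_mono[OF split, of "3 * \<kappa> / 8"] \<kappa> by (simp add: algebra_simps)
    also have "\<dots> \<le> 3/4 * (norm (z - zh))\<^sup>2 + \<kappa> * (norm (zh - zs))\<^sup>2"
      using \<kappa> by (intro add_mono mult_right_mono) auto
    finally show ?thesis by simp
  qed
  also have "\<dots> = (1 - 3 * \<mu> / (8 * \<beta>)) * (norm (fst s - zs))\<^sup>2"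
    by (simp add: z_def \<kappa>_def algebra_simps)
  finally show ?thesis .
qed

lemma FBF_contraction:
  fixes A :: "'a::euclidean_space \<Rightarrow> 'a set"
  assumes mm: "maximal_monotone A"
    and strong: "\<And>a b. inner (Bin a - Bin b) (a - b) \<ge> \<mu> * (norm (a - b))\<^sup>2"
    and lip: "\<beta>-lipschitz_on UNIV Bin" and \<mu>: "0 \<le> \<mu>" "\<mu> \<le> \<beta>" and \<beta>: "\<beta> > 0"
    and zs: "z0 - Bin zs \<in> A zs"
  shows "(norm (FBF z0 N A Bin \<beta> - zs))\<^sup>2 \<le> (1 - 3 * \<mu> / (8 * \<beta>)) ^ N * (norm (z0 - zs))\<^sup>2"
proof -
  let ?q = "1 - 3 * \<mu> / (8 * \<beta>)"
  have "?q \<ge> 0" using \<mu> \<beta> by (simp add: field_simps)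
  have "(norm (fst ((fbf_step z0 A Bin \<beta> ^^ n) s) - zs))\<^sup>2 \<le> ?q ^ n * (norm (fst s - zs))\<^sup>2" for n s
  proof (induction n)
    case (Suc n)
    have "(norm (fst ((fbf_step z0 A Bin \<beta> ^^ Suc n) s) - zs))\<^sup>2
        \<le> ?q * (norm (fst ((fbf_step z0 A Bin \<beta> ^^ n) s) - zs))\<^sup>2"
      using fbf_step_contraction[OF assms] by simp
    also have "\<dots> \<le> ?q * (?q ^ n * (norm (fst s - zs))\<^sup>2)"
      using Suc.IH \<open>?q \<ge> 0\<close> by (rule mult_left_mono)
    finally show ?case by (simp add: mult.assoc)
  qed simp
  from this[of N "(z0, 0, 0)"] show ?thesis by (simp add: FBF_def fbf_run_def)
qed

lemma FBF_resolvent_error: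
  fixes F :: "'a::euclidean_space \<Rightarrow> 'a" and G :: "'a \<Rightarrow> 'a set"
  assumes lip: "L-lipschitz_on UNIV F" and mm: "maximal_monotone G"
    and \<eta>: "\<eta> > 0" and \<eta>L: "\<eta> * L < 1"
  defines "J \<equiv> resolvent (scale_op \<eta> (sum_op F G))"
  shows "(norm (FBF x N (scale_op \<eta> G) (\<lambda>z. z + \<eta> *\<^sub>R F z) (1 + \<eta> * L) - J x))\<^sup>2
    \<le> (1 - 3 * (1 - \<eta> * L) / (8 * (1 + \<eta> * L))) ^ N * (norm (x - J x))\<^sup>2"
proof (rule FBF_contraction)
  have L: "L \<ge> 0" using lip by (rule lipschitz_on_nonneg)
  show "maximal_monotone (scale_op \<eta> G)"
    using mm \<eta> by (rule maximal_monotone_scale_op)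
  show "inner ((a + \<eta> *\<^sub>R F a) - (b + \<eta> *\<^sub>R F b)) (a - b) \<ge> (1 - \<eta> * L) * (norm (a - b))\<^sup>2"
    for a b
  proof -
    have "\<eta> * inner (F a - F b) (a - b) \<ge> \<eta> * (- L * (norm (a - b))\<^sup>2)"
      using lipschitz_on_inner_ge[OF lip] \<eta> by (intro mult_left_mono) auto
    moreover have "(a + \<eta> *\<^sub>R F a) - (b + \<eta> *\<^sub>R F b) = (a - b) + \<eta> *\<^sub>R (F a - F b)"
      by (simp add: algebra_simps)
    ultimately show ?thesis
      by (simp add: inner_add_left power2_norm_eq_inner algebra_simps)
  qed
  show "(1 + \<eta> * L)-lipschitz_on UNIV (\<lambda>z. z + \<eta> *\<^sub>R F z)"
    using lipschitz_on_add[OF lipschitz_on_id lipschitz_on_cmult_nonneg[OF lip, of \<eta>]] \<eta> by simp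
  have "\<eta> * L \<ge> 0" using \<eta> L by simp
  then show "0 \<le> 1 - \<eta> * L" "1 - \<eta> * L \<le> 1 + \<eta> * L" "0 < 1 + \<eta> * L"
    using \<eta>L by auto
  obtain v where "v \<in> G (J x)" and "x - J x = \<eta> *\<^sub>R (F (J x) + v)"
    using resolvent_scale_sum_op[OF lip mm \<eta> \<eta>L] by (auto simp: J_def mem_scale_op_sum_op)
  then show "x - (J x + \<eta> *\<^sub>R F (J x)) \<in> scale_op \<eta> G (J x)"
    by (auto simp: mem_scale_op algebra_simps)
qed

lemma fbf_step_funpow_counts:
  "snd ((fbf_step z0 A Bin \<beta> ^^ n) (z, a, b)) = (a + 2 * n, b + n)"
  by (induction n) (simp_all add: fbf_step_def Let_def prod_eq_iff)

lemma FBF_oracle_calls_le: "FBF_oracle_calls z0 N A Bin \<beta> \<le> 2 * N"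
  by (simp add: FBF_oracle_calls_def fbf_run_def fbf_step_funpow_counts)

section \<open>Inner accuracy\<close>

definition M_inner :: "nat \<Rightarrow> real" where
  "M_inner k = 8 * real (k + 1) * (ln (real (k + 2)))\<^sup>2"

definition inner_tolerance :: "nat \<Rightarrow> real" where
  "inner_tolerance k = 1 / (M_inner k * sqrt (M_inner k))"

lemma M_inner_ge: "M_inner k \<ge> 7/2 * real (k + 1)"
proof -
  have "ln 2 \<le> ln (real (k + 2))" by simp
  then have "2/3 \<le> ln (real (k + 2))" using ln2_ge_two_thirds by linarith
  then have "(2/3)\<^sup>2 \<le> (ln (real (k + 2)))\<^sup>2"
    by (rule power_mono) simp
  have "7/2 * real (k + 1) \<le> 8 * (2/3)\<^sup>2 * real (k + 1)"
    by (simp add: power2_eq_square)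
  also have "\<dots> \<le> 8 * (ln (real (k + 2)))\<^sup>2 * real (k + 1)"
    using \<open>(2/3)\<^sup>2 \<le> _\<close> by (intro mult_right_mono mult_left_mono) auto
  finally show ?thesis by (simp only: M_inner_def mult_ac)
qed

lemma inner_tolerance_pos: "inner_tolerance k > 0"
  using M_inner_ge[of k] by (simp add: inner_tolerance_def)

lemma inner_tolerance_le: "inner_tolerance k \<le> 1 / (6 * (real (k + 1) * sqrt (real (k + 1))))"
proof -
  define n where "n = real (k + 1)"
  have n: "n \<ge> 1" by (simp add: n_def)
  have M: "7/2 * n \<le> M_inner k" using M_inner_ge by (simp add: n_def)
  have "12/7 \<le> sqrt (7/2)" by (rule real_le_rsqrt) (simp add: power2_eq_square)
  then have "12/7 * sqrt n \<le> sqrt (7/2) * sqrt n" by (rule mult_right_mono) (use n in simp)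
  also have "\<dots> \<le> sqrt (M_inner k)" using M by (simp flip: real_sqrt_mult)
  finally have "(7/2 * n) * (12/7 * sqrt n) \<le> M_inner k * sqrt (M_inner k)"
    using M n by (intro mult_mono) auto
  moreover have "n * sqrt n > 0" using n by simp
  ultimately show ?thesis
    unfolding inner_tolerance_def n_def [symmetric] by (intro divide_left_mono) auto
qed

lemma sum_inverse_three_halves_le:
  assumes "k \<ge> 1"
  shows "(\<Sum>j<k. 1 / (real (j + 1) * sqrt (real (j + 1)))) \<le> 3 - 2 / sqrt (real k)"
  using assms
proof (induction k rule: nat_induct_at_least)
  case (Suc k)
  define a where "a = sqrt (real k)"
  define b where "b = sqrt (real (k + 1))"
  have a: "a \<ge> 1" using Suc.hyps by (simp add: a_def)
  have ab: "a \<le> b" by (simp add: a_def b_def)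
  have "(b - a) * (b + a) = 1"
    by (simp add: a_def b_def algebra_simps flip: power2_eq_square)
  then have "b - a = 1 / (b + a)"
    using a ab by (simp add: field_simps)
  moreover have "2 / a - 2 / b = 2 * (b - a) / (a * b)"
    using a ab by (simp add: field_simps)
  ultimately have "2 / a - 2 / b = 2 / (a * b * (b + a))"
    by simp
  also have "\<dots> \<ge> 1 / (b * b * b)"
  proof -
    have "a * b * (b + a) \<le> b * b * (2 * b)" using a ab by (intro mult_mono) auto
    then show ?thesis using a ab by (simp add: divide_simps)
  qed
  finally have "1 / (real (k + 1) * sqrt (real (k + 1))) \<le> 2 / a - 2 / b"
    by (simp add: b_def flip: power2_eq_square)
  then show ?case using Suc.IH by (simp add: a_def b_def)
qed simp

lemma sum_inner_tolerance_le: "(\<Sum>j<k. inner_tolerance j) \<le> 1/2"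
proof (cases "k = 0")
  case False
  have "(\<Sum>j<k. inner_tolerance j) \<le> (\<Sum>j<k. 1/6 * (1 / (real (j + 1) * sqrt (real (j + 1)))))"
    using inner_tolerance_le by (intro sum_mono) simp
  also have "\<dots> = 1/6 * (\<Sum>j<k. 1 / (real (j + 1) * sqrt (real (j + 1))))"
    by (simp add: sum_distrib_left)
  also have "\<dots> \<le> 1/6 * 3"
  proof -
    have "(\<Sum>j<k. 1 / (real (j + 1) * sqrt (real (j + 1)))) \<le> 3 - 2 / sqrt (real k)"
      using False by (intro sum_inverse_three_halves_le) simp
    moreover have "0 \<le> 2 / sqrt (real k)" by simp
    ultimately show ?thesis by linarith
  qed
  finally show ?thesis by simp
qed simp

lemma fbf_factor_pow_N_inner_le:
  assumes L: "L \<ge> 0" and \<eta>: "\<eta> > 0" and \<eta>L: "\<eta> * L < 1"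
  shows "(1 - 3 * (1 - \<eta> * L) / (8 * (1 + \<eta> * L))) ^ N_inner \<eta> L k \<le> inner_tolerance k"
proof -
  define \<kappa> where "\<kappa> = (1 - \<eta> * L) / (1 + \<eta> * L)"
  define M where "M = M_inner k"
  define N where "N = N_inner \<eta> L k"
  have "1 + \<eta> * L > 0" using L \<eta> by (simp add: add_pos_nonneg)
  then have \<kappa>: "0 < \<kappa>" "\<kappa> \<le> 1" using \<eta>L L \<eta> by (simp_all add: \<kappa>_def)
  have M: "M > 0" using M_inner_ge[of k] by (simp add: M_def)
  have "4 / \<kappa> * ln M \<le> real N"
    unfolding N_def N_inner_def M_def M_inner_def \<kappa>_def by (simp add: real_nat_ceiling_ge)
  then have "4 * ln M \<le> \<kappa> * real N" using \<kappa> by (simp add: field_simps)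
  have \<kappa>_eq: "3 * (1 - \<eta> * L) / (8 * (1 + \<eta> * L)) = 3 * \<kappa> / 8"
    by (simp add: \<kappa>_def)
  have "(1 - 3 * (1 - \<eta> * L) / (8 * (1 + \<eta> * L))) ^ N = (1 - 3 * \<kappa> / 8) ^ N"
    by (simp only: \<kappa>_eq)
  also have "\<dots> \<le> exp (- 3 * \<kappa> / 8) ^ N"
    using \<kappa> exp_ge_add_one_self[of "- 3 * \<kappa> / 8"] by (intro power_mono) auto
  also have "\<dots> = exp (- (3/8) * (\<kappa> * real N))"
    by (simp flip: exp_of_nat_mult)
  also have "\<dots> \<le> exp (- (3/2) * ln M)"
    using \<open>4 * ln M \<le> \<kappa> * real N\<close> by simp
  also have "\<dots> = inverse (M powr (3/2))"
    using M by (simp add: powr_def flip: exp_minus)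
  also have "M powr (3/2) = M * sqrt M"
    using M powr_add[of M 1 "1/2"] by (simp add: powr_half_sqrt)
  finally show ?thesis by (simp add: N_def M_def inner_tolerance_def divide_inverse)
qed

section \<open>The inexact Krasnosel'skii-Mann iteration\<close>

lemma norm_add_squared_le:
  fixes a b :: "'a::real_inner"
  assumes t: "t > 0"
  shows "(norm (a + b))\<^sup>2 \<le> (1 + t) * (norm a)\<^sup>2 + (1 + 1 / t) * (norm b)\<^sup>2"
proof -
  have "2 * inner a b \<le> 2 * (norm a * norm b)"
    using norm_cauchy_schwarz[of a b] by simp
  also have "\<dots> \<le> t * (norm a)\<^sup>2 + (norm b)\<^sup>2 / t"
  proof -
    have "0 \<le> (t * norm a - norm b)\<^sup>2 / t" using t by simp
    also have "\<dots> = t * (norm a)\<^sup>2 + (norm b)\<^sup>2 / t - 2 * (norm a * norm b)"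
      using t by (simp add: power2_eq_square field_simps)
    finally show ?thesis by simp
  qed
  finally show ?thesis by (simp add: norm_add_squared algebra_simps)
qed

lemma km_step_weak_mvi:
  fixes x z xs :: "'a::real_inner"
  assumes \<alpha>: "\<alpha> \<ge> 0"
    and mvi: "inner (x - z) (z - xs) \<ge> - (1 - \<alpha>) * (norm (x - z))\<^sup>2"
  shows "(norm ((1 - \<alpha>) *\<^sub>R x + \<alpha> *\<^sub>R z - xs))\<^sup>2
    \<le> (norm (x - xs))\<^sup>2 - \<alpha>\<^sup>2 * (norm (x - z))\<^sup>2"
proof -
  have "inner (x - xs) (x - z) = (norm (x - z))\<^sup>2 + inner (x - z) (z - xs)"
    by (simp add: power2_norm_eq_inner inner_commute flip: inner_add_right)
  then have "\<alpha> * inner (x - xs) (x - z) \<ge> \<alpha> * (\<alpha> * (norm (x - z))\<^sup>2)"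
    using mvi \<alpha> by (intro mult_left_mono) (auto simp: algebra_simps)
  moreover have eq: "(1 - \<alpha>) *\<^sub>R x + \<alpha> *\<^sub>R z - xs = (x - xs) - \<alpha> *\<^sub>R (x - z)"
    by (simp add: algebra_simps)
  have "(norm ((1 - \<alpha>) *\<^sub>R x + \<alpha> *\<^sub>R z - xs))\<^sup>2
      = (norm (x - xs))\<^sup>2 - 2 * (\<alpha> * inner (x - xs) (x - z)) + \<alpha>\<^sup>2 * (norm (x - z))\<^sup>2"
    unfolding eq norm_diff_squared inner_scaleR_right norm_scaleR power_mult_distrib power2_abs ..
  ultimately show ?thesis by (simp add: power2_eq_square)
qed

lemma inexact_km_step:
  fixes x y z xs :: "'a::real_inner"
  assumes \<alpha>: "\<alpha> \<ge> 0"
    and mvi: "inner (x - z) (z - xs) \<ge> - (1 - \<alpha>) * (norm (x - z))\<^sup>2"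
    and err: "(norm (y - z))\<^sup>2 \<le> \<delta> * (norm (x - z))\<^sup>2" and t: "t > 0"
  shows "(norm ((1 - \<alpha>) *\<^sub>R x + \<alpha> *\<^sub>R y - xs))\<^sup>2
    \<le> (1 + t) * ((norm (x - xs))\<^sup>2 - \<alpha>\<^sup>2 * (norm (x - z))\<^sup>2)
      + (1 + 1 / t) * (\<alpha>\<^sup>2 * (\<delta> * (norm (x - z))\<^sup>2))"
proof -
  have eq: "(1 - \<alpha>) *\<^sub>R x + \<alpha> *\<^sub>R y - xs = ((1 - \<alpha>) *\<^sub>R x + \<alpha> *\<^sub>R z - xs) + \<alpha> *\<^sub>R (y - z)"
    by (simp add: algebra_simps)
  have "(norm ((1 - \<alpha>) *\<^sub>R x + \<alpha> *\<^sub>R y - xs))\<^sup>2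
      \<le> (1 + t) * (norm ((1 - \<alpha>) *\<^sub>R x + \<alpha> *\<^sub>R z - xs))\<^sup>2
        + (1 + 1 / t) * (norm (\<alpha> *\<^sub>R (y - z)))\<^sup>2"
    unfolding eq by (rule norm_add_squared_le[OF t])
  also have "\<dots> \<le> (1 + t) * ((norm (x - xs))\<^sup>2 - \<alpha>\<^sup>2 * (norm (x - z))\<^sup>2)
      + (1 + 1 / t) * (\<alpha>\<^sup>2 * (\<delta> * (norm (x - z))\<^sup>2))"
    using km_step_weak_mvi[OF \<alpha> mvi] mult_left_mono[OF err, of "\<alpha>\<^sup>2"] t
    by (intro add_mono mult_left_mono) (auto simp: power_mult_distrib)
  finally show ?thesis .
qed

lemma perturbed_descent_sum_le:
  fixes R D \<delta> :: "nat \<Rightarrow> real"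
  assumes R: "\<And>k. R k \<ge> 0" and \<delta>: "\<And>k. \<delta> k \<ge> 0"
    and \<delta>_sum: "\<And>k. (\<Sum>j<k. \<delta> j) \<le> 1/2"
    and growth: "\<And>k. R (Suc k) \<le> (1 + \<delta> k) * R k"
    and descent: "\<And>k. R (Suc k) \<le> (1 + 3 * \<delta> k) * R k - c * D k"
  shows "c * (\<Sum>k<K. D k) \<le> 4 * R 0"
proof -
  have R_prod: "R k * (1 - (\<Sum>j<k. \<delta> j)) \<le> R 0" for k
  proof (induction k)
    case (Suc k)
    define s where "s = (\<Sum>j<k. \<delta> j)"
    have "s \<ge> 0" using \<delta> by (simp add: s_def sum_nonneg)
    have "R (Suc k) * (1 - (s + \<delta> k)) \<le> (1 + \<delta> k) * R k * (1 - (s + \<delta> k))"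
      using growth \<delta>_sum[of "Suc k"] by (intro mult_right_mono) (auto simp: s_def)
    also have "\<dots> = R k * (1 - s - \<delta> k * (s + \<delta> k))"
      by (simp add: algebra_simps)
    also have "\<dots> \<le> R k * (1 - s)"
      using R[of k] \<delta>[of k] \<open>s \<ge> 0\<close> by (intro mult_left_mono) auto
    also have "\<dots> \<le> R 0" using Suc.IH by (simp add: s_def)
    finally show ?case by (simp add: s_def)
  qed simp
  have R_bound: "R k \<le> 2 * R 0" for k
  proof -
    have "R k * (1/2) \<le> R k * (1 - (\<Sum>j<k. \<delta> j))"
      using \<delta>_sum[of k] R[of k] by (intro mult_left_mono) auto
    then show ?thesis using R_prod[of k] by simp
  qed
  have telescope: "c * (\<Sum>k<K. D k) \<le> R 0 - R K + 3 * (\<Sum>k<K. \<delta> k * R k)" for K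
  proof (induction K)
    case (Suc K)
    have "c * (\<Sum>k<Suc K. D k) = c * (\<Sum>k<K. D k) + c * D K"
      by (simp add: distrib_left)
    moreover have "(1 + 3 * \<delta> K) * R K = R K + 3 * (\<delta> K * R K)"
      by (simp add: algebra_simps)
    ultimately show ?case using Suc.IH descent[of K] by simp
  qed simp
  have "(\<Sum>k<K. \<delta> k * R k) \<le> (\<Sum>k<K. \<delta> k * (2 * R 0))"
    using R_bound \<delta> by (intro sum_mono mult_left_mono) auto
  also have "\<dots> = 2 * R 0 * (\<Sum>k<K. \<delta> k)"
    by (simp add: sum_distrib_left mult_ac)
  also have "\<dots> \<le> 2 * R 0 * (1/2)"
    using \<delta>_sum R by (intro mult_left_mono) auto
  finally show ?thesis using telescope[of K] R[of K] by simp
qed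

lemma inexact_km_sum_le:
  fixes x y z :: "nat \<Rightarrow> 'a::real_inner"
  assumes \<alpha>: "\<alpha> \<ge> 0" and iter: "\<And>k. x (Suc k) = (1 - \<alpha>) *\<^sub>R x k + \<alpha> *\<^sub>R y k"
    and mvi: "\<And>k. inner (x k - z k) (z k - xs) \<ge> - (1 - \<alpha>) * (norm (x k - z k))\<^sup>2"
    and err: "\<And>k. (norm (y k - z k))\<^sup>2 \<le> \<delta> k * (norm (x k - z k))\<^sup>2"
    and \<delta>: "\<And>k. \<delta> k > 0" and \<delta>_sum: "\<And>k. (\<Sum>j<k. \<delta> j) \<le> 1/2"
  shows "\<alpha>\<^sup>2 * (\<Sum>k<K. (norm (x k - z k))\<^sup>2) \<le> 6 * (norm (x 0 - xs))\<^sup>2"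
proof -
  define R where "R k = (norm (x k - xs))\<^sup>2" for k
  define D where "D k = \<alpha>\<^sup>2 * (norm (x k - z k))\<^sup>2" for k
  have step: "R (Suc k) \<le> (1 + t) * (R k - D k) + (1 + 1 / t) * (\<delta> k * D k)" if "t > 0" for k t
    using inexact_km_step[OF \<alpha> mvi err that] by (simp add: R_def D_def iter mult.left_commute)
  have "R (Suc k) \<le> (1 + \<delta> k) * R k" for k
  proof -
    have "(1 + \<delta> k) * (R k - D k) + (1 + 1 / \<delta> k) * (\<delta> k * D k) = (1 + \<delta> k) * R k"
      using \<delta>[of k] by (simp add: field_simps)
    then show ?thesis using step[of "\<delta> k" k] \<delta>[of k] by simp
  qed
  moreover have "R (Suc k) \<le> (1 + 3 * \<delta> k) * R k - 2/3 * D k" for k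
  proof -
    have "(1 + 3 * \<delta> k) * (R k - D k) + (1 + 1 / (3 * \<delta> k)) * (\<delta> k * D k)
        = (1 + 3 * \<delta> k) * R k - 2/3 * D k - 2 * (\<delta> k * D k)"
      using \<delta>[of k] by (simp add: field_simps)
    moreover have "\<delta> k * D k \<ge> 0" using \<delta>[of k] by (simp add: D_def)
    ultimately show ?thesis using step[of "3 * \<delta> k" k] \<delta>[of k] by simp
  qed
  ultimately have "2/3 * (\<Sum>k<K. D k) \<le> 4 * R 0"
    using \<delta> \<delta>_sum by (intro perturbed_descent_sum_le[of R \<delta>]) (auto simp: R_def less_imp_le)
  moreover have "(\<Sum>k<K. D k) = \<alpha>\<^sup>2 * (\<Sum>k<K. (norm (x k - z k))\<^sup>2)"
    by (simp add: D_def sum_distrib_left)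
  ultimately show ?thesis unfolding R_def by linarith
qed

lemma inexact_km_resolvent_sum_le:
  fixes F :: "'a::euclidean_space \<Rightarrow> 'a" and G :: "'a \<Rightarrow> 'a set" and x :: "nat \<Rightarrow> 'a"
  assumes lip: "L-lipschitz_on UNIV F" and mm: "maximal_monotone G"
    and \<rho>: "0 < \<rho>" "\<rho> < \<eta>" and \<eta>L: "\<eta> * L < 1"
    and wmvi: "\<forall>y u. u \<in> sum_op F G y \<longrightarrow> inner u (y - xs) \<ge> - \<rho> * (norm u)\<^sup>2"
    and iter: "\<And>k. x (Suc k) = (\<rho> / \<eta>) *\<^sub>R x k + (1 - \<rho> / \<eta>) *\<^sub>R
      FBF (x k) (N_inner \<eta> L k) (scale_op \<eta> G) (\<lambda>z. z + \<eta> *\<^sub>R F z) (1 + \<eta> * L)"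
  defines "J \<equiv> resolvent (scale_op \<eta> (sum_op F G))"
  shows "(1 - \<rho> / \<eta>)\<^sup>2 * (\<Sum>k<K. (norm (x k - J (x k)))\<^sup>2) \<le> 6 * (norm (x 0 - xs))\<^sup>2"
proof -
  have \<eta>: "\<eta> > 0" using \<rho> by linarith
  have L: "L \<ge> 0" using lip by (rule lipschitz_on_nonneg)
  define y where "y k = FBF (x k) (N_inner \<eta> L k) (scale_op \<eta> G) (\<lambda>z. z + \<eta> *\<^sub>R F z) (1 + \<eta> * L)"
    for k
  have "1 - \<rho> / \<eta> \<ge> 0" using \<rho> \<eta> by simp
  then show ?thesis
  proof (rule inexact_km_sum_le[OF _ _ _ _ inner_tolerance_pos sum_inner_tolerance_le, where y = y])
    show "x (Suc k) = (1 - (1 - \<rho> / \<eta>)) *\<^sub>R x k + (1 - \<rho> / \<eta>) *\<^sub>R y k" for k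
      using iter by (simp add: y_def)
    show "inner (x k - J (x k)) (J (x k) - xs) \<ge> - (1 - (1 - \<rho> / \<eta>)) * (norm (x k - J (x k)))\<^sup>2"
      for k
      using scale_op_weak_mvi[OF wmvi \<eta> resolvent_scale_sum_op[OF lip mm \<eta> \<eta>L]] by (simp add: J_def)
    show "(norm (y k - J (x k)))\<^sup>2 \<le> inner_tolerance k * (norm (x k - J (x k)))\<^sup>2" for k
      using FBF_resolvent_error[OF lip mm \<eta> \<eta>L, of "x k" "N_inner \<eta> L k"]
        mult_right_mono[OF fbf_factor_pow_N_inner_le[OF L \<eta> \<eta>L], of "(norm (x k - J (x k)))\<^sup>2" k]
      by (simp add: y_def J_def)
  qed
qed

theorem theorem3p1:
  fixes F :: "'a::euclidean_space \<Rightarrow> 'a" and G :: "'a \<Rightarrow> 'a set"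
    and L \<eta> \<rho> :: real and xstar :: 'a and x :: "nat \<Rightarrow> 'a"
  assumes F_lip: "L-lipschitz_on UNIV F"
    and G_mm: "maximal_monotone G"
    and rho_pos: "\<rho> > 0"
    and eta_L: "\<eta> * L < 1"
    and rho_eta: "\<rho> < \<eta>"
    and sol: "0 \<in> sum_op F G xstar"
    and wmvi: "\<forall>y u. u \<in> sum_op F G y \<longrightarrow> inner u (y - xstar) \<ge> - \<rho> * (norm u)\<^sup>2"
    and x_rec: "\<forall>k. x (Suc k) =
         (1 - (1 - \<rho> / \<eta>)) *\<^sub>R x k
         + (1 - \<rho> / \<eta>) *\<^sub>R FBF (x k) (N_inner \<eta> L k) (scale_op \<eta> G)
                                  (\<lambda>z. z + \<eta> *\<^sub>R F z) (1 + \<eta> * L)"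
  shows "(\<forall>K::nat. K \<ge> 1 \<longrightarrow>
           (1 / real K) * (\<Sum>k<K. (1 / \<eta>\<^sup>2) *
               (norm (x k - resolvent (scale_op \<eta> (sum_op F G)) (x k)))\<^sup>2)
           \<le> 11 * (norm (x 0 - xstar))\<^sup>2 / ((\<eta> - \<rho>)\<^sup>2 * real K))
       \<and> (\<forall>k. FBF_oracle_calls (x k) (N_inner \<eta> L k) (scale_op \<eta> G)
                (\<lambda>z. z + \<eta> *\<^sub>R F z) (1 + \<eta> * L) \<le> 2 * N_inner \<eta> L k)"
proof
  show "\<forall>k. FBF_oracle_calls (x k) (N_inner \<eta> L k) (scale_op \<eta> G)
                (\<lambda>z. z + \<eta> *\<^sub>R F z) (1 + \<eta> * L) \<le> 2 * N_inner \<eta> L k"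
    by (simp add: FBF_oracle_calls_le)
  let ?J = "resolvent (scale_op \<eta> (sum_op F G))"
  define \<alpha> where "\<alpha> = 1 - \<rho> / \<eta>"
  have \<alpha>: "\<alpha> > 0" "\<alpha> * \<eta> = \<eta> - \<rho>" and \<eta>: "\<eta> > 0"
    using rho_pos rho_eta by (simp_all add: \<alpha>_def field_simps)
  show "\<forall>K::nat. K \<ge> 1 \<longrightarrow>
      (1 / real K) * (\<Sum>k<K. (1 / \<eta>\<^sup>2) * (norm (x k - ?J (x k)))\<^sup>2)
      \<le> 11 * (norm (x 0 - xstar))\<^sup>2 / ((\<eta> - \<rho>)\<^sup>2 * real K)"
  proof (intro allI impI)
    fix K :: nat
    have "\<alpha>\<^sup>2 * (\<Sum>k<K. (norm (x k - ?J (x k)))\<^sup>2) \<le> 6 * (norm (x 0 - xstar))\<^sup>2"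
      using inexact_km_resolvent_sum_le[OF F_lip G_mm rho_pos rho_eta eta_L wmvi] x_rec
      by (simp add: \<alpha>_def)
    then have bound: "\<alpha>\<^sup>2 * (\<Sum>k<K. (norm (x k - ?J (x k)))\<^sup>2) \<le> 11 * (norm (x 0 - xstar))\<^sup>2"
      using zero_le_power2[of "norm (x 0 - xstar)"] by linarith
    have "(1 / real K) * (\<Sum>k<K. (1 / \<eta>\<^sup>2) * (norm (x k - ?J (x k)))\<^sup>2)
        = \<alpha>\<^sup>2 * (\<Sum>k<K. (norm (x k - ?J (x k)))\<^sup>2) / ((\<alpha> * \<eta>)\<^sup>2 * real K)"
      using \<alpha> \<eta> by (simp add: power_mult_distrib field_simps flip: sum_divide_distrib)
    also have "\<dots> \<le> 11 * (norm (x 0 - xstar))\<^sup>2 / ((\<eta> - \<rho>)\<^sup>2 * real K)"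
      unfolding \<alpha>(2) using bound by (intro divide_right_mono) auto
    finally show "(1 / real K) * (\<Sum>k<K. (1 / \<eta>\<^sup>2) * (norm (x k - ?J (x k)))\<^sup>2)
        \<le> 11 * (norm (x 0 - xstar))\<^sup>2 / ((\<eta> - \<rho>)\<^sup>2 * real K)" .
  qed
qed

end
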